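(* Let $N\ge1$. The composition of $\psi$ (restricted to $\bar\Gamma(2)_2=[\bar\Gamma(2),\bar\Gamma(2)]$) with reduction $\mathbb{Z}^3\to(\mathbb{Z}/N'\mathbb{Z})^3$ extends to a group homomorphism $\bar\psi:\Phi_N\to(\mathbb{Z}/N'\mathbb{Z})^3$ which vanishes on $A^N$ and $B^N$ and satisfies, for $\gamma\in\bar\Gamma(2)$ and $\delta\in\Phi_N$, $$\bar\psi(\gamma\delta\gamma^{-1})=(-\bar\phi_1(\gamma)\bar\phi_2(\delta),0)+\bar\psi(\delta).$$ In particular, for $i,j,k\in\mathbb{Z}$, $\bar\psi(A^iB^jC^kB^{-j}A^{-i})=(-ik,-jk,k)$.
   Context: Let $\bar\Gamma(2)=\Gamma(2)/\{\pm1\}\subset\mathrm{PSL}_2(\mathbb{Z})$, freely generated by the classes $A$ of $\begin{pmatrix}1&2\\0&1\end{pmatrix}$ and $B$ of $\begin{pmatrix}1&0\\2&1\end{pmatrix}$; $[g,h]=ghg^{-1}h^{-1}$, $C=[A,B]$; $\bar\Gamma(2)_1=\bar\Gamma(2)$, $\bar\Gamma(2)_{k+1}=[\bar\Gamma(2)_k,\bar\Gamma(2)]$. Let $\psi:\bar\Gamma(2)_2\to\mathbb{Z}^3$ be the homomorphism with kernel $\bar\Gamma(2)_4$ inducing the isomorphism $\bar\Gamma(2)_2/\bar\Gamma(2)_4\cong\mathbb{Z}^3$ that sends $C\mapsto(0,0,1)$, $[C,A]\mapsto(1,0,0)$, $[C,B]\mapsto(0,1,0)$. Set $N'=N$ if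 $N$ is odd and $N'=N/2$ if $N$ is even. $\Phi_N$ is the kernel of $\bar\phi_1:\bar\Gamma(2)\to(\mathbb{Z}/N\mathbb{Z})^2$, $A\mapsto(1,0)$, $B\mapsto(0,1)$. $\bar\phi_2:\Phi_N\to\mathbb{Z}/N'\mathbb{Z}$ is the homomorphism vanishing on $A^N$ and $B^N$ and taking the value $1$ on each $A^iB^jCB^{-j}A^{-i}$ ($i,j\in\mathbb{Z}$). The product $\bar\phi_1(\gamma)\bar\phi_2(\delta)$ is computed in $(\mathbb{Z}/N'\mathbb{Z})^2$ (using $N'\mid N$), and $(v,0)$ denotes the element of $(\mathbb{Z}/N'\mathbb{Z})^3$ with first two coordinates $v$ and last coordinate $0$. *)

theory Defs
  imports "HOL-Algebra.Algebra" "HOL-Library.Product_Plus"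
begin

text \<open>Integer 2x2 matrices (a,b,c,d) standing for [[a,b],[c,d]].\<close>
type_synonym mat2 = "int \<times> int \<times> int \<times> int"

fun mmul :: "mat2 \<Rightarrow> mat2 \<Rightarrow> mat2" where
  "mmul (a,b,c,d) (e,f,g,h) = (a*e+b*g, a*f+b*h, c*e+d*g, c*f+d*h)"

fun mneg :: "mat2 \<Rightarrow> mat2" where
  "mneg (a,b,c,d) = (-a,-b,-c,-d)"

definition Gamma2 :: "mat2 set" where
  "Gamma2 = {M. case M of (p,q,r,s) \<Rightarrow> p*s - q*r = 1 \<and> odd p \<and> even q \<and> even r \<and> odd s}"

definition pm :: "mat2 \<Rightarrow> mat2 set" where
  "pm M = {M, mneg M}"

text \<open>The group Gamma(2)/{+-1}, elements being the classes {M,-M}.\<close>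
definition Gbar :: "mat2 set monoid" where
  "Gbar = \<lparr> carrier = pm ` Gamma2,
            monoid.mult = (\<lambda>U V. {mmul P Q | P Q. P \<in> U \<and> Q \<in> V}),
            monoid.one = pm (1,0,0,1) \<rparr>"

definition gA :: "mat2 set" where "gA = pm (1,2,0,1)"
definition gB :: "mat2 set" where "gB = pm (1,0,2,1)"

definition gcomm :: "mat2 set \<Rightarrow> mat2 set \<Rightarrow> mat2 set" where
  "gcomm g h = g \<otimes>\<^bsub>Gbar\<^esub> h \<otimes>\<^bsub>Gbar\<^esub> inv\<^bsub>Gbar\<^esub> g \<otimes>\<^bsub>Gbar\<^esub> inv\<^bsub>Gbar\<^esub> h"

definition gC :: "mat2 set" where "gC = gcomm gA gB"

text \<open>Lower central series, 0-indexed auxiliary version: lcs0 k = Gbar_(k+1).\<close>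
primrec lcs0 :: "nat \<Rightarrow> mat2 set set" where
  "lcs0 0 = carrier Gbar"
| "lcs0 (Suc k) = generate Gbar {gcomm x y | x y. x \<in> lcs0 k \<and> y \<in> carrier Gbar}"

text \<open>Paper indexing: lcs 1 = Gbar, lcs (k+1) = [lcs k, Gbar].\<close>
definition lcs :: "nat \<Rightarrow> mat2 set set" where
  "lcs k = lcs0 (k - 1)"

text \<open>Componentwise congruence of integer vectors (elements of (Z/nZ)^2, (Z/nZ)^3).\<close>
definition modeq2 :: "int \<Rightarrow> int \<times> int \<Rightarrow> int \<times> int \<Rightarrow> bool" where
  "modeq2 n u v \<longleftrightarrow> fst u mod n = fst v mod n \<and> snd u mod n = snd v mod n"

definition modeq3 :: "int \<Rightarrow> int \<times> int \<times> int \<Rightarrow> int \<times> int \<times> int \<Rightarrow> bool" where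
  "modeq3 n u v \<longleftrightarrow> fst u mod n = fst v mod n \<and> fst (snd u) mod n = fst (snd v) mod n
                      \<and> snd (snd u) mod n = snd (snd v) mod n"

definition Nprime :: "nat \<Rightarrow> int" where
  "Nprime N = (if odd N then int N else int N div 2)"

end

theory Submission
  imports Defs
begin

text \<open>Let \<open>abel y = \<psi> [C, y]\<close>. As \<open>[lcs 3, \<Gamma>] \<subseteq> lcs 4 = ker \<psi>\<close>, this is a homomorphism,
  \<open>abel (A^i B^j k) = (i, j, 0)\<close> for \<open>k \<in> lcs 2\<close>, and \<open>\<psi> [c, y] = \<psi>\<^sub>3 c \<cdot> abel y\<close> for
  \<open>c \<in> lcs 2\<close>; hence conjugation acts by \<open>\<psi> (g c g\<inverse>) = \<psi> c - \<psi>\<^sub>3 c \<cdot> abel g\<close>.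
  Put \<open>\<psi>-bar (A^i B^j k) = \<psi> k\<close>. Expanding products and conjugates in \<open>\<Phi>\<^sub>N\<close>, where \<open>N\<close>
  divides \<open>i\<close> and \<open>j\<close>, the error terms are either multiples of \<open>abel\<close> of elements of \<open>\<Phi>\<^sub>N\<close> or
  values \<open>\<psi> [x, h]\<close> with \<open>h \<in> \<langle>A^N, B^N\<rangle>\<close>. The latter are divisible by \<open>N'\<close> because
  \<open>\<psi> [B, A^N] = (N(N - 1)/2, 0, -N)\<close>, which is why \<open>N'\<close> is \<open>N/2\<close> for even \<open>N\<close>. This makes
  \<open>\<psi>-bar\<close> a homomorphism modulo \<open>N'\<close> with
  \<open>\<psi>-bar (\<gamma> \<delta> \<gamma>\<inverse>) \<equiv> \<psi>-bar \<delta> - \<psi>-bar\<^sub>3 \<delta> \<cdot> abel \<gamma>\<close>. Finally \<open>\<phi>\<^sub>1 \<equiv> abel\<close> modulo \<open>N\<close>, since both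
  are homomorphisms agreeing on \<open>A\<close> and \<open>B\<close>, and \<open>\<phi>\<^sub>2 \<equiv> \<psi>\<^sub>3\<close> on \<open>lcs 2\<close>, since both are
  homomorphisms there agreeing on the conjugates of \<open>C\<close>, which generate \<open>lcs 2\<close>.\<close>

section \<open>Integer vectors modulo n\<close>

abbreviation pr1 :: "int \<times> int \<times> int \<Rightarrow> int" where "pr1 v \<equiv> fst v"
abbreviation pr2 :: "int \<times> int \<times> int \<Rightarrow> int" where "pr2 v \<equiv> fst (snd v)"
abbreviation pr3 :: "int \<times> int \<times> int \<Rightarrow> int" where "pr3 v \<equiv> snd (snd v)"

definition scale3 :: "int \<Rightarrow> int \<times> int \<times> int \<Rightarrow> int \<times> int \<times> int" where
  "scale3 k v = (k * pr1 v, k * pr2 v, k * pr3 v)"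

definition dvd3 :: "int \<Rightarrow> int \<times> int \<times> int \<Rightarrow> bool" where
  "dvd3 n v \<longleftrightarrow> n dvd pr1 v \<and> n dvd pr2 v \<and> n dvd pr3 v"

lemma scale3_simps [simp]:
  "pr1 (scale3 k v) = k * pr1 v" "pr2 (scale3 k v) = k * pr2 v" "pr3 (scale3 k v) = k * pr3 v"
  by (simp_all add: scale3_def)

lemma scale3_zero [simp]: "scale3 k 0 = 0"
  by (simp add: scale3_def zero_prod_def)

lemma dvd3_zero [simp]: "dvd3 n 0"
  by (simp add: dvd3_def)

lemma dvd3_diff: "dvd3 n u \<Longrightarrow> dvd3 n v \<Longrightarrow> dvd3 n (u - v)"
  by (simp add: dvd3_def)

lemma dvd3_add: "dvd3 n u \<Longrightarrow> dvd3 n v \<Longrightarrow> dvd3 n (u + v)"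
  by (simp add: dvd3_def)

lemma dvd3_uminus: "dvd3 n u \<Longrightarrow> dvd3 n (- u)"
  by (simp add: dvd3_def)

lemma dvd3_scale3_left: "n dvd k \<Longrightarrow> dvd3 n (scale3 k v)"
  by (simp add: dvd3_def)

lemma modeq3_iff_dvd3: "modeq3 n u v \<longleftrightarrow> dvd3 n (u - v)"
  by (simp add: modeq3_def dvd3_def mod_eq_dvd_iff)

lemma modeq3_refl [simp]: "modeq3 n u u"
  by (simp add: modeq3_def)

lemma modeq2_iff_dvd: "modeq2 n u v \<longleftrightarrow> n dvd fst u - fst v \<and> n dvd snd u - snd v"
  by (simp add: modeq2_def mod_eq_dvd_iff)

lemma Nprime_dvd: "Nprime N dvd int N"
  by (auto simp: Nprime_def elim!: evenE)

lemma Nprime_dvd_half: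
  assumes "2 * p = int N * (int N - 1)"
  shows "Nprime N dvd p"
proof (cases "odd N")
  case True
  then have "even (int N - 1)"
    by simp
  then obtain w where "int N - 1 = 2 * w"
    by blast
  then show ?thesis
    using True assms by (simp add: Nprime_def)
next
  case False
  then obtain M where "N = 2 * M"
    by blast
  then show ?thesis
    using False assms by (simp add: Nprime_def)
qed

section \<open>Commutators and homomorphisms modulo a subgroup\<close>

definition commutator :: "('a, 'b) monoid_scheme \<Rightarrow> 'a \<Rightarrow> 'a \<Rightarrow> 'a" where
  "commutator G x y = x \<otimes>\<^bsub>G\<^esub> y \<otimes>\<^bsub>G\<^esub> inv\<^bsub>G\<^esub> x \<otimes>\<^bsub>G\<^esub> inv\<^bsub>G\<^esub> y"

context group
begin

lemma mult_inv_cancel_left: "x \<in> carrier G \<Longrightarrow> y \<in> carrier G \<Longrightarrow> x \<otimes> (inv x \<otimes> y) = y"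
  by (simp flip: m_assoc)

lemma inv_mult_cancel_left: "x \<in> carrier G \<Longrightarrow> y \<in> carrier G \<Longrightarrow> inv x \<otimes> (x \<otimes> y) = y"
  by (simp flip: m_assoc)

lemmas word_simps = m_assoc inv_mult_group mult_inv_cancel_left inv_mult_cancel_left

lemma commutator_closed [simp]: "x \<in> carrier G \<Longrightarrow> y \<in> carrier G \<Longrightarrow> commutator G x y \<in> carrier G"
  by (simp add: commutator_def)

lemma commutator_one_left [simp]: "y \<in> carrier G \<Longrightarrow> commutator G \<one> y = \<one>"
  by (simp add: commutator_def)

lemma commutator_one_right [simp]: "x \<in> carrier G \<Longrightarrow> commutator G x \<one> = \<one>"
  by (simp add: commutator_def m_assoc)

lemma commutator_self [simp]: "x \<in> carrier G \<Longrightarrow> commutator G x x = \<one>"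
  by (simp add: commutator_def word_simps)

lemma commutator_swap:
  "x \<in> carrier G \<Longrightarrow> y \<in> carrier G \<Longrightarrow> commutator G y x = inv (commutator G x y)"
  by (simp add: commutator_def word_simps)

lemma conj_eq_commutator_mult:
  "x \<in> carrier G \<Longrightarrow> c \<in> carrier G \<Longrightarrow> x \<otimes> c \<otimes> inv x = commutator G x c \<otimes> c"
  by (simp add: commutator_def m_assoc)

lemma commutator_mult_right:
  "x \<in> carrier G \<Longrightarrow> y \<in> carrier G \<Longrightarrow> z \<in> carrier G \<Longrightarrow>
    commutator G x (y \<otimes> z) = commutator G x y \<otimes> (y \<otimes> commutator G x z \<otimes> inv y)"
  by (simp add: commutator_def word_simps)

lemma commutator_mult_left:
  "x \<in> carrier G \<Longrightarrow> y \<in> carrier G \<Longrightarrow> z \<in> carrier G \<Longrightarrow>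
    commutator G (x \<otimes> y) z = (x \<otimes> commutator G y z \<otimes> inv x) \<otimes> commutator G x z"
  by (simp add: commutator_def word_simps)

lemma commutator_inv_right:
  "x \<in> carrier G \<Longrightarrow> y \<in> carrier G \<Longrightarrow>
    commutator G x (inv y) = inv y \<otimes> inv (commutator G x y) \<otimes> y"
  by (simp add: commutator_def word_simps)

lemma commutator_inv_left:
  "x \<in> carrier G \<Longrightarrow> y \<in> carrier G \<Longrightarrow>
    commutator G (inv x) y = inv x \<otimes> inv (commutator G x y) \<otimes> x"
  by (simp add: commutator_def word_simps)

lemma commutator_int_pow_self [simp]: "x \<in> carrier G \<Longrightarrow> commutator G x (x [^] (i::int)) = \<one>"
  using int_pow_mult[of x 1 i] int_pow_mult[of x i 1]
  by (simp add: commutator_def word_simps add.commute)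

lemma conj_commutator:
  "g \<in> carrier G \<Longrightarrow> x \<in> carrier G \<Longrightarrow> y \<in> carrier G \<Longrightarrow>
    g \<otimes> commutator G x y \<otimes> inv g = commutator G (g \<otimes> x \<otimes> inv g) (g \<otimes> y \<otimes> inv g)"
  by (simp add: commutator_def word_simps)

end

lemma (in group) commutator_mem_normal_generate:
  assumes N: "N \<lhd> G" and S: "S \<subseteq> carrier G"
    and gens: "\<And>s t. s \<in> S \<Longrightarrow> t \<in> S \<Longrightarrow> commutator G s t \<in> N"
    and x: "x \<in> generate G S" and y: "y \<in> generate G S"
  shows "commutator G x y \<in> N"
proof -
  interpret N: normal N G
    by (rule N)
  have carrier: "h \<in> generate G S \<Longrightarrow> h \<in> carrier G" for h
    using generate_in_carrier[OF S] .
  have right: "commutator G s y \<in> N" if s: "s \<in> S" and y: "y \<in> generate G S" for s y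
    using y
  proof (induction y rule: generate.induct)
    case (inv t)
    have "inv (commutator G s t) \<in> N"
      using gens[OF s inv] by (rule N.m_inv_closed)
    moreover have "s \<in> carrier G" "t \<in> carrier G"
      using s inv S by auto
    ultimately show ?case
      by (simp add: commutator_inv_right N.inv_op_closed1)
  next
    case (eng h1 h2)
    then show ?case
      using s S carrier commutator_mult_right N.inv_op_closed2 N.m_closed by auto
  qed (use s S gens in auto)
  from x show ?thesis
  proof (induction x rule: generate.induct)
    case (inv s)
    have "inv (commutator G s y) \<in> N"
      using right[OF inv y] by (rule N.m_inv_closed)
    moreover have "s \<in> carrier G" "y \<in> carrier G"
      using y inv S carrier by auto
    ultimately show ?case
      by (simp add: commutator_inv_left N.inv_op_closed1)
  next
    case (eng h1 h2)
    then show ?case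
      using y carrier commutator_mult_left N.inv_op_closed2 N.m_closed by auto
  qed (use y carrier right in auto)
qed

text \<open>A homomorphism from \<open>H\<close> to the quotient \<open>'c / M\<close> of an abelian group by an additive
  subgroup \<open>M\<close>: \<open>M = {0}\<close> gives ordinary homomorphisms, \<open>M = n\<int>\<close> homomorphisms modulo \<open>n\<close>.\<close>

locale hom_modulo = group G for G (structure) +
  fixes H :: "'a set" and \<kappa> :: "'a \<Rightarrow> 'c::ab_group_add" and M :: "'c set"
  assumes subgroup: "subgroup H G"
    and zero_mem: "0 \<in> M"
    and diff_mem: "u \<in> M \<Longrightarrow> v \<in> M \<Longrightarrow> u - v \<in> M"
    and mult_mem: "x \<in> H \<Longrightarrow> y \<in> H \<Longrightarrow> \<kappa> (x \<otimes> y) - \<kappa> x - \<kappa> y \<in> M"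
begin

lemma add_mem: "u \<in> M \<Longrightarrow> v \<in> M \<Longrightarrow> u + v \<in> M"
  using diff_mem[OF _ diff_mem[OF zero_mem]] by fastforce

lemma uminus_mem: "u \<in> M \<Longrightarrow> - u \<in> M"
  using diff_mem[OF zero_mem] by fastforce

lemma one_mem: "\<kappa> \<one> \<in> M"
proof -
  have "\<kappa> (\<one> \<otimes> \<one>) - \<kappa> \<one> - \<kappa> \<one> \<in> M"
    using mult_mem subgroup.one_closed[OF subgroup] by blast
  from uminus_mem[OF this] show ?thesis
    by simp
qed

lemma inv_mem: "x \<in> H \<Longrightarrow> \<kappa> (inv x) + \<kappa> x \<in> M"
  using diff_mem[OF one_mem mult_mem[of "inv x" x]] subgroup
  by (simp add: subgroup.m_inv_closed subgroup.mem_carrier algebra_simps)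

lemma conj_mem: "x \<in> H \<Longrightarrow> y \<in> H \<Longrightarrow> \<kappa> (x \<otimes> y \<otimes> inv x) - \<kappa> y \<in> M"
  using add_mem[OF add_mem[OF mult_mem[of "x \<otimes> y" "inv x"] mult_mem[of x y]] inv_mem[of x]] subgroup
  by (simp add: subgroup.m_inv_closed subgroup.m_closed algebra_simps)

lemma generate_mem:
  assumes S: "S \<subseteq> H" and gens: "\<And>s. s \<in> S \<Longrightarrow> \<kappa> s \<in> M" and g: "g \<in> generate G S"
  shows "\<kappa> g \<in> M"
  using g
proof (induction g rule: generate.induct)
  case one
  then show ?case
    by (rule one_mem)
next
  case (incl s)
  then show ?case
    by (rule gens)
next
  case (inv s)
  then show ?case
    using diff_mem[OF inv_mem gens] S by fastforce
next
  case (eng h1 h2)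
  have "h1 \<in> H" "h2 \<in> H"
    using eng.hyps generate_subgroup_incl[OF S subgroup] by auto
  then have "\<kappa> (h1 \<otimes> h2) - \<kappa> h1 - \<kappa> h2 + \<kappa> h1 + \<kappa> h2 \<in> M"
    using add_mem[OF add_mem[OF mult_mem eng.IH(1)] eng.IH(2)] by blast
  then show ?case
    by simp
qed

end

lemma (in group) hom_moduloI:
  assumes "subgroup H G" "0 \<in> M" "\<And>u v. u \<in> M \<Longrightarrow> v \<in> M \<Longrightarrow> u - v \<in> M"
    and "\<And>x y. x \<in> H \<Longrightarrow> y \<in> H \<Longrightarrow> \<kappa> (x \<otimes> y) - \<kappa> x - \<kappa> y \<in> M"
  shows "hom_modulo G H \<kappa> M"
  using assms by (simp add: hom_modulo_def hom_modulo_axioms_def)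

locale additive_map = group G for G (structure) +
  fixes H :: "'a set" and \<kappa> :: "'a \<Rightarrow> 'c::ab_group_add"
  assumes subgroup: "subgroup H G"
    and additive: "x \<in> H \<Longrightarrow> y \<in> H \<Longrightarrow> \<kappa> (x \<otimes> y) = \<kappa> x + \<kappa> y"

sublocale additive_map \<subseteq> hom_modulo G H \<kappa> "{0}"
  by (rule hom_modulo.intro[OF is_group]) (simp add: hom_modulo_axioms_def subgroup additive)

lemma (in group) additive_mapI:
  "subgroup H G \<Longrightarrow> (\<And>x y. x \<in> H \<Longrightarrow> y \<in> H \<Longrightarrow> \<kappa> (x \<otimes> y) = \<kappa> x + \<kappa> y) \<Longrightarrow> additive_map G H \<kappa>"
  by (simp add: additive_map_def additive_map_axioms_def)

context additive_map
begin

lemma map_one [simp]: "\<kappa> \<one> = 0"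
  using one_mem by simp

lemma map_inv: "x \<in> H \<Longrightarrow> \<kappa> (inv x) = - \<kappa> x"
  using inv_mem by (simp add: eq_neg_iff_add_eq_0)

end

lemma (in group) additive_map_int_pow:
  fixes \<kappa> :: "'a \<Rightarrow> int \<times> int \<times> int"
  assumes "additive_map G H \<kappa>" and x: "x \<in> H"
  shows "\<kappa> (x [^] (i::int)) = scale3 i (\<kappa> x)"
proof -
  interpret additive_map G H \<kappa>
    by (rule assms(1))
  have xG: "x \<in> carrier G"
    using x subgroup.mem_carrier[OF subgroup] by blast
  have step: "\<kappa> (x [^] (i + 1)) = \<kappa> (x [^] i) + \<kappa> x" for i :: int
    using additive[OF subgroup_int_pow_closed[OF subgroup x] x] int_pow_mult[OF xG, of i 1] xG
    by simp
  show ?thesis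
  proof (induction i rule: int_induct[where k = 0])
    case (step2 i)
    then show ?case
      using step[of "i - 1"] by (simp add: scale3_def prod_eq_iff algebra_simps)
  qed (simp_all add: step scale3_def prod_eq_iff algebra_simps)
qed

section \<open>The group \<open>Gbar\<close> and its generators\<close>

lemma mmul_assoc: "mmul (mmul x y) z = mmul x (mmul y z)"
  by (cases x; cases y; cases z) (simp add: algebra_simps)

lemma mmul_mneg_left: "mmul (mneg x) y = mneg (mmul x y)"
  by (cases x; cases y) simp

lemma mmul_mneg_right: "mmul x (mneg y) = mneg (mmul x y)"
  by (cases x; cases y) simp

lemma mneg_mneg [simp]: "mneg (mneg x) = x"
  by (cases x) simp

lemma mmul_one_left: "mmul (1,0,0,1) x = x"
  by (cases x) simp

lemma Gamma2_mmul: "P \<in> Gamma2 \<Longrightarrow> Q \<in> Gamma2 \<Longrightarrow> mmul P Q \<in> Gamma2"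
  by (cases P; cases Q) (auto simp: Gamma2_def algebra_simps)

lemma carrier_Gbar: "carrier Gbar = pm ` Gamma2"
  by (simp add: Gbar_def)

lemma one_Gbar: "\<one>\<^bsub>Gbar\<^esub> = pm (1,0,0,1)"
  by (simp add: Gbar_def)

lemma pm_mult: "pm P \<otimes>\<^bsub>Gbar\<^esub> pm Q = pm (mmul P Q)"
proof -
  have "pm P \<otimes>\<^bsub>Gbar\<^esub> pm Q = {mmul P' Q' | P' Q'. P' \<in> {P, mneg P} \<and> Q' \<in> {Q, mneg Q}}"
    by (simp add: Gbar_def pm_def)
  also have "\<dots> = {mmul P Q, mneg (mmul P Q)}"
  proof -
    have "mmul (mneg P) Q = mneg (mmul P Q)" "mmul P (mneg Q) = mneg (mmul P Q)"
      "mmul (mneg P) (mneg Q) = mmul P Q"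
      by (simp_all only: mmul_mneg_left mmul_mneg_right mneg_mneg)
    then show ?thesis
      by (auto simp del: split_paired_Ex mmul.simps mneg.simps) metis
  qed
  finally show ?thesis
    by (simp add: pm_def)
qed

lemma pm_mneg: "pm (mneg M) = pm M"
  by (auto simp: pm_def)

lemma group_Gbar: "group Gbar"
proof (rule groupI)
  fix x y assume "x \<in> carrier Gbar" "y \<in> carrier Gbar"
  then show "x \<otimes>\<^bsub>Gbar\<^esub> y \<in> carrier Gbar"
    by (auto simp: carrier_Gbar pm_mult Gamma2_mmul simp del: mmul.simps)
next
  show "\<one>\<^bsub>Gbar\<^esub> \<in> carrier Gbar"
    by (simp add: carrier_Gbar one_Gbar Gamma2_def)
next
  fix x y z assume "x \<in> carrier Gbar" "y \<in> carrier Gbar" "z \<in> carrier Gbar"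
  then show "x \<otimes>\<^bsub>Gbar\<^esub> y \<otimes>\<^bsub>Gbar\<^esub> z = x \<otimes>\<^bsub>Gbar\<^esub> (y \<otimes>\<^bsub>Gbar\<^esub> z)"
    by (auto simp: carrier_Gbar pm_mult mmul_assoc simp del: mmul.simps)
next
  fix x assume "x \<in> carrier Gbar"
  then show "\<one>\<^bsub>Gbar\<^esub> \<otimes>\<^bsub>Gbar\<^esub> x = x"
    by (auto simp: carrier_Gbar one_Gbar pm_mult mmul_one_left simp del: mmul.simps)
next
  fix x assume "x \<in> carrier Gbar"
  then obtain p q r s where x: "x = pm (p,q,r,s)" "(p,q,r,s) \<in> Gamma2"
    by (auto simp: carrier_Gbar)
  then have "pm (s,-q,-r,p) \<in> carrier Gbar" "pm (s,-q,-r,p) \<otimes>\<^bsub>Gbar\<^esub> x = \<one>\<^bsub>Gbar\<^esub>"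
    by (auto simp: carrier_Gbar Gamma2_def pm_mult one_Gbar algebra_simps)
  then show "\<exists>y\<in>carrier Gbar. y \<otimes>\<^bsub>Gbar\<^esub> x = \<one>\<^bsub>Gbar\<^esub>"
    by blast
qed

interpretation Gbar: group Gbar
  by (rule group_Gbar)

abbreviation Gbar_mult :: "mat2 set \<Rightarrow> mat2 set \<Rightarrow> mat2 set" (infixl "\<star>" 70)
  where "x \<star> y \<equiv> x \<otimes>\<^bsub>Gbar\<^esub> y"

abbreviation Gbar_inv :: "mat2 set \<Rightarrow> mat2 set"
  where "Gbar_inv x \<equiv> inv\<^bsub>Gbar\<^esub> x"

abbreviation Gbar_pow :: "mat2 set \<Rightarrow> int \<Rightarrow> mat2 set" (infixr "\<up>" 75)
  where "x \<up> k \<equiv> x [^]\<^bsub>Gbar\<^esub> k"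

abbreviation \<Gamma> :: "mat2 set set"
  where "\<Gamma> \<equiv> carrier Gbar"

lemma gA_carrier [simp]: "gA \<in> \<Gamma>"
  by (auto simp: gA_def carrier_Gbar Gamma2_def)

lemma gB_carrier [simp]: "gB \<in> \<Gamma>"
  by (auto simp: gB_def carrier_Gbar Gamma2_def)

lemma inv_pm: "(p,q,r,s) \<in> Gamma2 \<Longrightarrow> Gbar_inv (pm (p,q,r,s)) = pm (s,-q,-r,p)"
  by (rule Gbar.inv_equality) (auto simp: pm_mult one_Gbar Gamma2_def algebra_simps carrier_Gbar)

lemma gA_pow: "gA \<up> k = pm (1, 2 * k, 0, 1)"
proof -
  have nat_pow: "gA [^]\<^bsub>Gbar\<^esub> n = pm (1, 2 * int n, 0, 1)" for n :: nat
    by (induction n) (auto simp: gA_def one_Gbar pm_mult algebra_simps)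
  show ?thesis
    by (cases "k < 0") (auto simp: int_pow_def2 nat_pow inv_pm Gamma2_def)
qed

lemma gB_pow: "gB \<up> k = pm (1, 0, 2 * k, 1)"
proof -
  have nat_pow: "gB [^]\<^bsub>Gbar\<^esub> n = pm (1, 0, 2 * int n, 1)" for n :: nat
    by (induction n) (auto simp: gB_def one_Gbar pm_mult algebra_simps)
  show ?thesis
    by (cases "k < 0") (auto simp: int_pow_def2 nat_pow inv_pm Gamma2_def)
qed

lemma pm_diagonal_eq_gA_pow:
  assumes "(p,q,0,s) \<in> Gamma2"
  shows "pm (p,q,0,s) = gA \<up> (p * q div 2)"
proof -
  have q: "even q"
    using assms by (simp add: Gamma2_def)
  have "(p = 1 \<and> s = 1) \<or> (p = -1 \<and> s = -1)"
    using assms by (simp add: Gamma2_def zmult_eq_1_iff)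
  then show ?thesis
  proof
    assume "p = -1 \<and> s = -1"
    moreover have "pm (-1,q,0,-1) = pm (1,-q,0,1)"
      using pm_mneg[of "(1,-q,0,1)"] by simp
    ultimately show ?thesis
      using q by (simp add: gA_pow)
  qed (use q in \<open>simp add: gA_pow\<close>)
qed

text \<open>A Euclidean step on the first column \<open>(p, r)\<close>, by left multiplication with \<open>A^e\<close> or
  \<open>B^e\<close>, \<open>e = \<plusminus>1\<close>. Since \<open>p\<close> is odd and \<open>r\<close> even, \<open>|p| \<noteq> |r|\<close> and the step decreases \<open>|p| + |r|\<close>.\<close>

lemma Gamma2_descent:
  assumes M: "(p,q,r,s) \<in> Gamma2" and r: "r \<noteq> 0"
  obtains e p' q' r' s' where "(p',q',r',s') \<in> Gamma2" "\<bar>p'\<bar> + \<bar>r'\<bar> < \<bar>p\<bar> + \<bar>r\<bar>"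
    "pm (p,q,r,s) = gA \<up> e \<star> pm (p',q',r',s') \<or> pm (p,q,r,s) = gB \<up> e \<star> pm (p',q',r',s')"
proof -
  define e :: int where "e = (if (p > 0) = (r > 0) then 1 else -1)"
  have "odd p" "even r"
    using M by (auto simp: Gamma2_def)
  then have "\<bar>p\<bar> \<noteq> \<bar>r\<bar>"
    by (metis abs_eq_iff even_minus)
  have "p \<noteq> 0"
    using \<open>odd p\<close> by auto
  consider "\<bar>r\<bar> < \<bar>p\<bar>" | "\<bar>p\<bar> < \<bar>r\<bar>"
    using \<open>\<bar>p\<bar> \<noteq> \<bar>r\<bar>\<close> by linarith
  then show ?thesis
  proof cases
    case 1
    have "(p - 2*e*r, q - 2*e*s, r, s) \<in> Gamma2"
      using M by (auto simp: Gamma2_def algebra_simps)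
    moreover have "\<bar>p - 2*e*r\<bar> + \<bar>r\<bar> < \<bar>p\<bar> + \<bar>r\<bar>"
      using 1 r unfolding e_def by auto
    moreover have "pm (p,q,r,s) = gA \<up> e \<star> pm (p - 2*e*r, q - 2*e*s, r, s)"
      by (simp add: gA_pow pm_mult algebra_simps)
    ultimately show ?thesis
      using that[of "p - 2*e*r" "q - 2*e*s" r s e] by blast
  next
    case 2
    have "(p, q, r - 2*e*p, s - 2*e*q) \<in> Gamma2"
      using M by (auto simp: Gamma2_def algebra_simps)
    moreover have "\<bar>p\<bar> + \<bar>r - 2*e*p\<bar> < \<bar>p\<bar> + \<bar>r\<bar>"
      using 2 \<open>p \<noteq> 0\<close> unfolding e_def by auto
    moreover have "pm (p,q,r,s) = gB \<up> e \<star> pm (p, q, r - 2*e*p, s - 2*e*q)"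
      by (simp add: gB_pow pm_mult algebra_simps)
    ultimately show ?thesis
      using that[of p q "r - 2*e*p" "s - 2*e*q" e] by blast
  qed
qed

lemma Gamma2_in_generate_AB:
  assumes "(p,q,r,s) \<in> Gamma2"
  shows "pm (p,q,r,s) \<in> generate Gbar {gA, gB}"
  using assms
proof (induction "nat (\<bar>p\<bar> + \<bar>r\<bar>)" arbitrary: p q r s rule: less_induct)
  case less
  let ?H = "generate Gbar {gA, gB}"
  have H: "subgroup ?H Gbar"
    by (simp add: Gbar.generate_is_subgroup)
  have pow_mem: "gA \<up> k \<in> ?H" "gB \<up> k \<in> ?H" for k
    by (auto intro: Gbar.subgroup_int_pow_closed[OF H] generate.incl)
  show ?case
  proof (cases "r = 0")
    case True
    then show ?thesis
      using less.prems pow_mem by (simp add: pm_diagonal_eq_gA_pow)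
  next
    case False
    obtain e p' q' r' s' where M': "(p',q',r',s') \<in> Gamma2"
      and less': "\<bar>p'\<bar> + \<bar>r'\<bar> < \<bar>p\<bar> + \<bar>r\<bar>"
      and eq: "pm (p,q,r,s) = gA \<up> e \<star> pm (p',q',r',s') \<or> pm (p,q,r,s) = gB \<up> e \<star> pm (p',q',r',s')"
      by (rule Gamma2_descent[OF less.prems False])
    from less' have "nat (\<bar>p'\<bar> + \<bar>r'\<bar>) < nat (\<bar>p\<bar> + \<bar>r\<bar>)"
      by simp
    then have "pm (p',q',r',s') \<in> ?H"
      using less.hyps M' by blast
    then show ?thesis
      using eq pow_mem subgroup.m_closed[OF H] by metis
  qed
qed

lemma generate_AB: "generate Gbar {gA, gB} = \<Gamma>"
proof
  show "generate Gbar {gA, gB} \<subseteq> \<Gamma>"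
    by (simp add: Gbar.generate_incl)
  show "\<Gamma> \<subseteq> generate Gbar {gA, gB}"
    by (auto simp: carrier_Gbar intro: Gamma2_in_generate_AB)
qed

lemma Gbar_hom_modulo_mem:
  assumes "hom_modulo Gbar \<Gamma> \<kappa> M" "\<kappa> gA \<in> M" "\<kappa> gB \<in> M" "g \<in> \<Gamma>"
  shows "\<kappa> g \<in> M"
  by (rule hom_modulo.generate_mem[OF assms(1), of "{gA, gB}"]) (use assms(2-4) in \<open>auto simp: generate_AB\<close>)

lemma Gbar_additive_eq_zero:
  fixes \<kappa> :: "mat2 set \<Rightarrow> 'c::ab_group_add"
  assumes "\<And>x y. x \<in> \<Gamma> \<Longrightarrow> y \<in> \<Gamma> \<Longrightarrow> \<kappa> (x \<star> y) = \<kappa> x + \<kappa> y"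
    and "\<kappa> gA = 0" "\<kappa> gB = 0" "g \<in> \<Gamma>"
  shows "\<kappa> g = 0"
proof -
  interpret additive_map Gbar \<Gamma> \<kappa>
    by (intro Gbar.additive_mapI Gbar.subgroup_self assms(1))
  show ?thesis
    using Gbar_hom_modulo_mem[of \<kappa> "{0}"] hom_modulo_axioms assms(2-4) by simp
qed

section \<open>Lower central series\<close>

lemma commutator_Gbar: "commutator Gbar = gcomm"
  by (simp add: fun_eq_iff commutator_def gcomm_def)

lemmas gcomm_closed [simp] = Gbar.commutator_closed[unfolded commutator_Gbar]
lemmas gcomm_self [simp] = Gbar.commutator_self[unfolded commutator_Gbar]
lemmas gcomm_one_right [simp] = Gbar.commutator_one_right[unfolded commutator_Gbar]
lemmas gcomm_int_pow_self [simp] = Gbar.commutator_int_pow_self[unfolded commutator_Gbar]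
lemmas gcomm_swap = Gbar.commutator_swap[unfolded commutator_Gbar]
lemmas conj_eq_gcomm_mult = Gbar.conj_eq_commutator_mult[unfolded commutator_Gbar]
lemmas gcomm_mult_right = Gbar.commutator_mult_right[unfolded commutator_Gbar]
lemmas gcomm_mult_left = Gbar.commutator_mult_left[unfolded commutator_Gbar]

lemma lcs0_normal: "lcs0 k \<lhd> Gbar"
proof (induction k)
  case 0
  then show ?case
    by (simp add: Gbar.normal_self)
next
  case (Suc k)
  interpret N: normal "lcs0 k" Gbar
    by (rule Suc)
  show ?case
    unfolding lcs0.simps
  proof (rule Gbar.normal_generateI)
    fix h g assume "h \<in> {gcomm x y |x y. x \<in> lcs0 k \<and> y \<in> \<Gamma>}" "g \<in> \<Gamma>"
    then obtain x y where "h = gcomm x y" "x \<in> lcs0 k" "y \<in> \<Gamma>" "g \<in> \<Gamma>"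
      by blast
    moreover have "g \<star> x \<star> Gbar_inv g \<in> lcs0 k" "g \<star> y \<star> Gbar_inv g \<in> \<Gamma>"
      using \<open>x \<in> lcs0 k\<close> \<open>y \<in> \<Gamma>\<close> \<open>g \<in> \<Gamma>\<close> N.inv_op_closed2 by auto
    ultimately show "g \<star> h \<star> Gbar_inv g \<in> {gcomm x y |x y. x \<in> lcs0 k \<and> y \<in> \<Gamma>}"
      using Gbar.conj_commutator[of g x y] N.subset by (auto simp: commutator_Gbar)
  qed (use N.subset in auto)
qed

lemma lcs0_Suc_subset: "lcs0 (Suc k) \<subseteq> lcs0 k"
  unfolding lcs0.simps
proof (rule Gbar.generate_subgroup_incl)
  interpret N: normal "lcs0 k" Gbar
    by (rule lcs0_normal)
  show "subgroup (lcs0 k) Gbar"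
    by (rule N.subgroup_axioms)
  show "{gcomm x y |x y. x \<in> lcs0 k \<and> y \<in> \<Gamma>} \<subseteq> lcs0 k"
  proof clarify
    fix x y assume x: "x \<in> lcs0 k" and y: "y \<in> \<Gamma>"
    then have "gcomm x y = x \<star> (y \<star> Gbar_inv x \<star> Gbar_inv y)"
      using N.subset by (auto simp: gcomm_def Gbar.m_assoc)
    then show "gcomm x y \<in> lcs0 k"
      using x y by (simp add: N.inv_op_closed2)
  qed
qed

lemma lcs_normal: "lcs k \<lhd> Gbar"
  by (simp add: lcs_def lcs0_normal)

lemma lcs_subgroup: "subgroup (lcs k) Gbar"
  using lcs_normal normal_imp_subgroup by blast

lemma one_mem_lcs [simp]: "\<one>\<^bsub>Gbar\<^esub> \<in> lcs k"
  by (rule subgroup.one_closed[OF lcs_subgroup])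

lemma lcs_Suc_subset: "lcs (Suc k) \<subseteq> lcs k"
  using lcs0_Suc_subset by (cases k) (simp_all add: lcs_def)

lemma lcs_subset_carrier: "lcs k \<subseteq> \<Gamma>"
  by (rule subgroup.subset[OF lcs_subgroup])

lemma gcomm_mem_lcs_Suc: "x \<in> lcs k \<Longrightarrow> y \<in> \<Gamma> \<Longrightarrow> gcomm x y \<in> lcs (Suc k)"
  by (cases k) (auto simp: lcs_def intro: generate.incl)

lemma gcomm_mem_lcs_Suc': "x \<in> lcs k \<Longrightarrow> y \<in> \<Gamma> \<Longrightarrow> gcomm y x \<in> lcs (Suc k)"
  using gcomm_swap[of x y] gcomm_mem_lcs_Suc[of x k y] lcs_subset_carrier
    subgroup.m_inv_closed[OF lcs_subgroup] by (metis subsetD)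

lemma gcomm_mem_lcs2 [simp]: "x \<in> \<Gamma> \<Longrightarrow> y \<in> \<Gamma> \<Longrightarrow> gcomm x y \<in> lcs 2"
  using gcomm_mem_lcs_Suc[of x 1 y] by (simp add: lcs_def)

text \<open>Moving \<open>B^j\<close> past \<open>A^i'\<close> costs the commutator \<open>[B^-j, A^-i']\<close>:
  \<open>B^j A^i' = A^i' B^j [B^-j, A^-i']\<close>.\<close>

lemma AB_normal_form_mult:
  assumes k: "k \<in> lcs 2" and k': "k' \<in> lcs 2"
  shows "\<exists>k''\<in>lcs 2. (gA \<up> i \<star> gB \<up> j \<star> k) \<star> (gA \<up> i' \<star> gB \<up> j' \<star> k')
    = gA \<up> (i + i') \<star> gB \<up> (j + j') \<star> k''"
proof -
  interpret L: normal "lcs 2" Gbar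
    by (rule lcs_normal)
  define a b a' b' where "a = gA \<up> i" "b = gB \<up> j" "a' = gA \<up> i'" "b' = gB \<up> j'"
  have carrier: "a \<in> \<Gamma>" "b \<in> \<Gamma>" "a' \<in> \<Gamma>" "b' \<in> \<Gamma>" "k \<in> \<Gamma>" "k' \<in> \<Gamma>"
    using k k' L.subset by (auto simp: a_b_a'_b'_def)
  define k'' where "k'' = (Gbar_inv b' \<star> gcomm (Gbar_inv b) (Gbar_inv a') \<star> b')
      \<star> (Gbar_inv (a' \<star> b') \<star> k \<star> (a' \<star> b')) \<star> k'"
  have "k'' \<in> lcs 2"
    unfolding k''_def using carrier k k' by (simp add: L.inv_op_closed1)
  moreover have "(gA \<up> i \<star> gB \<up> j \<star> k) \<star> (gA \<up> i' \<star> gB \<up> j' \<star> k')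
      = gA \<up> (i + i') \<star> gB \<up> (j + j') \<star> k''"
    using carrier unfolding k''_def
    by (simp add: Gbar.int_pow_mult a_b_a'_b'_def[symmetric] gcomm_def Gbar.word_simps)
  ultimately show ?thesis
    by blast
qed

lemma decomposition_AB:
  assumes "g \<in> \<Gamma>"
  shows "\<exists>i j k. k \<in> lcs 2 \<and> g = gA \<up> i \<star> gB \<up> j \<star> k"
proof -
  have "g \<in> generate Gbar {gA, gB}"
    using assms by (simp add: generate_AB)
  then show ?thesis
  proof (induction g rule: generate.induct)
    case one
    have "\<one>\<^bsub>Gbar\<^esub> = gA \<up> 0 \<star> gB \<up> 0 \<star> \<one>\<^bsub>Gbar\<^esub>"
      by simp
    then show ?case
      using one_mem_lcs by blast
  next
    case (incl h)
    then have "h = gA \<up> 1 \<star> gB \<up> 0 \<star> \<one>\<^bsub>Gbar\<^esub> \<or> h = gA \<up> 0 \<star> gB \<up> 1 \<star> \<one>\<^bsub>Gbar\<^esub>"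
      by auto
    then show ?case
      using one_mem_lcs by blast
  next
    case (inv h)
    then have "Gbar_inv h = gA \<up> -1 \<star> gB \<up> 0 \<star> \<one>\<^bsub>Gbar\<^esub> \<or>
        Gbar_inv h = gA \<up> 0 \<star> gB \<up> -1 \<star> \<one>\<^bsub>Gbar\<^esub>"
      by (auto simp: Gbar.int_pow_neg)
    then show ?case
      using one_mem_lcs by blast
  next
    case (eng x y)
    then show ?case
      using AB_normal_form_mult by blast
  qed
qed

lemma lcs2_subset_normal_closure_gC:
  "lcs 2 \<subseteq> generate Gbar {g \<star> gC \<star> Gbar_inv g | g. g \<in> \<Gamma>}"
proof -
  let ?NC = "generate Gbar {g \<star> gC \<star> Gbar_inv g | g. g \<in> \<Gamma>}"
  have C: "gC \<in> \<Gamma>"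
    by (simp add: gC_def)
  have normal: "?NC \<lhd> Gbar"
  proof (rule Gbar.normal_generateI)
    fix h g assume "h \<in> {g \<star> gC \<star> Gbar_inv g | g. g \<in> \<Gamma>}" and g: "g \<in> \<Gamma>"
    then obtain g' where g': "g' \<in> \<Gamma>" "h = g' \<star> gC \<star> Gbar_inv g'"
      by blast
    then have "g \<star> h \<star> Gbar_inv g = (g \<star> g') \<star> gC \<star> Gbar_inv (g \<star> g')"
      using g C by (simp add: Gbar.word_simps)
    then show "g \<star> h \<star> Gbar_inv g \<in> {g \<star> gC \<star> Gbar_inv g | g. g \<in> \<Gamma>}"
      using g g' by blast
  qed (use C in auto)
  have "gC = \<one>\<^bsub>Gbar\<^esub> \<star> gC \<star> Gbar_inv \<one>\<^bsub>Gbar\<^esub>"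
    using C by simp
  then have C_mem: "gC \<in> ?NC"
    by (blast intro: generate.incl)
  have "gcomm x y \<in> ?NC" if "x \<in> \<Gamma>" "y \<in> \<Gamma>" for x y
  proof (rule Gbar.commutator_mem_normal_generate[OF normal, of "{gA, gB}", unfolded commutator_Gbar])
    fix s t assume "s \<in> {gA, gB}" "t \<in> {gA, gB}"
    then show "gcomm s t \<in> ?NC"
      using C_mem normal.inv_op_closed1[OF normal] gcomm_swap[of gA gB]
        subgroup.m_inv_closed[OF normal_imp_subgroup[OF normal]] subgroup.one_closed[OF normal_imp_subgroup[OF normal]]
      by (auto simp: gC_def)
  qed (use that in \<open>simp_all add: generate_AB\<close>)
  then have "{gcomm x y |x y. x \<in> \<Gamma> \<and> y \<in> \<Gamma>} \<subseteq> ?NC"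
    by blast
  then show ?thesis
    unfolding lcs_def using Gbar.generate_subgroup_incl normal_imp_subgroup[OF normal] by simp
qed

lemma gC_mem_lcs2 [simp]: "gC \<in> lcs 2"
  by (simp add: gC_def)

lemma lcs2_subset_carrier: "x \<in> lcs 2 \<Longrightarrow> x \<in> \<Gamma>"
  using lcs_subset_carrier by blast

lemma lcs3_subset_lcs2: "x \<in> lcs 3 \<Longrightarrow> x \<in> lcs 2"
  using lcs_Suc_subset[of 2] by auto

lemma lcs4_subset_lcs3: "x \<in> lcs 4 \<Longrightarrow> x \<in> lcs 3"
  using lcs_Suc_subset[of 3] by auto

lemma gcomm_lcs2_mem_lcs3: "x \<in> lcs 2 \<Longrightarrow> y \<in> \<Gamma> \<Longrightarrow> gcomm x y \<in> lcs 3"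
  using gcomm_mem_lcs_Suc[of x 2 y] by simp

lemma gcomm_lcs3_mem_lcs4: "x \<in> lcs 3 \<Longrightarrow> y \<in> \<Gamma> \<Longrightarrow> gcomm x y \<in> lcs 4"
  using gcomm_mem_lcs_Suc[of x 3 y] by simp

lemma gcomm_lcs3_mem_lcs4': "x \<in> lcs 3 \<Longrightarrow> y \<in> \<Gamma> \<Longrightarrow> gcomm y x \<in> lcs 4"
  using gcomm_mem_lcs_Suc'[of x 3 y] by simp

lemma gcomm_lcs4_mem_lcs4: "x \<in> lcs 4 \<Longrightarrow> y \<in> \<Gamma> \<Longrightarrow> gcomm x y \<in> lcs 4"
  using gcomm_mem_lcs_Suc[of x 4 y] lcs_Suc_subset[of 4] by auto

section \<open>The coordinates \<open>\<psi>\<close> on \<open>lcs 2 / lcs 4\<close>\<close>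

locale psi_coordinates =
  fixes \<psi> :: "mat2 set \<Rightarrow> int \<times> int \<times> int"
  assumes psi_hom: "\<forall>x\<in>lcs 2. \<forall>y\<in>lcs 2. \<psi> (x \<otimes>\<^bsub>Gbar\<^esub> y) = \<psi> x + \<psi> y"
    and psi_ker: "{x \<in> lcs 2. \<psi> x = 0} = lcs 4"
    and psi_C: "\<psi> gC = (0,0,1)"
    and psi_CA: "\<psi> (gcomm gC gA) = (1,0,0)"
    and psi_CB: "\<psi> (gcomm gC gB) = (0,1,0)"

sublocale psi_coordinates \<subseteq> psi: additive_map Gbar "lcs 2" \<psi>
  using psi_hom by (intro Gbar.additive_mapI lcs_subgroup) simp

context psi_coordinates
begin

lemma psi_eq_0_iff: "x \<in> lcs 2 \<Longrightarrow> \<psi> x = 0 \<longleftrightarrow> x \<in> lcs 4"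
  using psi_ker by blast

lemma psi_lcs4: "x \<in> lcs 4 \<Longrightarrow> \<psi> x = 0"
  using psi_eq_0_iff lcs4_subset_lcs3 lcs3_subset_lcs2 by blast

lemma psi_conj_lcs3:
  assumes g: "g \<in> \<Gamma>" and c: "c \<in> lcs 3"
  shows "\<psi> (g \<star> c \<star> Gbar_inv g) = \<psi> c"
proof -
  have "gcomm g c \<in> lcs 4"
    using gcomm_lcs3_mem_lcs4' c g .
  then show ?thesis
    using conj_eq_gcomm_mult[of g c] psi.additive[of "gcomm g c" c] psi_lcs4 g c
      lcs4_subset_lcs3 lcs3_subset_lcs2 lcs2_subset_carrier by simp
qed

lemma factor_through_psi:
  fixes K :: "mat2 set \<Rightarrow> int \<times> int \<times> int"
  assumes K: "additive_map Gbar (lcs 2) K" and K_lcs4: "\<And>x. x \<in> lcs 4 \<Longrightarrow> K x = 0"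
    and c: "c \<in> lcs 2"
  shows "K c = scale3 (pr1 (\<psi> c)) (K (gcomm gC gA)) + scale3 (pr2 (\<psi> c)) (K (gcomm gC gB))
      + scale3 (pr3 (\<psi> c)) (K gC)"
proof -
  interpret K: additive_map Gbar "lcs 2" K
    by (rule K)
  have gens: "gC \<in> lcs 2" "gcomm gC gA \<in> lcs 2" "gcomm gC gB \<in> lcs 2"
    using gcomm_lcs2_mem_lcs3 lcs3_subset_lcs2 by auto
  define c' where "c' = gC \<up> pr3 (\<psi> c) \<star> gcomm gC gA \<up> pr1 (\<psi> c) \<star> gcomm gC gB \<up> pr2 (\<psi> c)"
  have pows: "gC \<up> pr3 (\<psi> c) \<in> lcs 2" "gcomm gC gA \<up> pr1 (\<psi> c) \<in> lcs 2"
      "gcomm gC gB \<up> pr2 (\<psi> c) \<in> lcs 2"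
    using gens Gbar.subgroup_int_pow_closed[OF lcs_subgroup] by auto
  then have c': "c' \<in> lcs 2"
    unfolding c'_def by (simp add: subgroup.m_closed[OF lcs_subgroup])
  have "\<psi> c' = \<psi> c"
    using pows gens unfolding c'_def
    by (simp add: psi.additive subgroup.m_closed[OF lcs_subgroup] Gbar.additive_map_int_pow[OF psi.additive_map_axioms]
        psi_C psi_CA psi_CB scale3_def prod_eq_iff)
  then have "\<psi> (Gbar_inv c' \<star> c) = 0"
    using c c' by (simp add: psi.additive psi.map_inv subgroup.m_inv_closed[OF lcs_subgroup])
  then have d: "Gbar_inv c' \<star> c \<in> lcs 4"
    using c c' psi_eq_0_iff by (simp add: subgroup.m_inv_closed[OF lcs_subgroup] subgroup.m_closed[OF lcs_subgroup])
  have "c = c' \<star> (Gbar_inv c' \<star> c)"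
    using c c' lcs2_subset_carrier by (simp add: Gbar.mult_inv_cancel_left)
  then have "K c = K c'"
    using K.additive[OF c'] d K_lcs4 lcs4_subset_lcs3 lcs3_subset_lcs2 by (metis add.right_neutral)
  also have "\<dots> = scale3 (pr1 (\<psi> c)) (K (gcomm gC gA)) + scale3 (pr2 (\<psi> c)) (K (gcomm gC gB))
      + scale3 (pr3 (\<psi> c)) (K gC)"
    using pows gens unfolding c'_def
    by (simp add: K.additive subgroup.m_closed[OF lcs_subgroup] Gbar.additive_map_int_pow[OF K]
        algebra_simps)
  finally show ?thesis .
qed


text \<open>Since \<open>\<psi> [C, A] = (1,0,0)\<close> and \<open>\<psi> [C, B] = (0,1,0)\<close>, this is the abelianization map
  \<open>A^i B^j k \<mapsto> (i, j, 0)\<close>.\<close>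

definition abel :: "mat2 set \<Rightarrow> int \<times> int \<times> int" where
  "abel y = \<psi> (gcomm gC y)"

lemma abel_mult:
  assumes y: "y \<in> \<Gamma>" and z: "z \<in> \<Gamma>"
  shows "abel (y \<star> z) = abel y + abel z"
proof -
  have "gcomm gC y \<in> lcs 3" "gcomm gC z \<in> lcs 3"
    using gcomm_lcs2_mem_lcs3 y z by auto
  then show ?thesis
    unfolding abel_def gcomm_mult_right[OF lcs2_subset_carrier[OF gC_mem_lcs2] y z]
    using y psi_conj_lcs3 lcs3_subset_lcs2
    by (simp add: psi.additive normal.inv_op_closed2[OF lcs_normal])
qed

end

sublocale psi_coordinates \<subseteq> abel: additive_map Gbar \<Gamma> abel
  by (intro Gbar.additive_mapI Gbar.subgroup_self abel_mult)

context psi_coordinates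
begin

lemma abel_gA [simp]: "abel gA = (1,0,0)"
  by (simp add: abel_def psi_CA)

lemma abel_gB [simp]: "abel gB = (0,1,0)"
  by (simp add: abel_def psi_CB)

lemma psi_gcomm_lcs2:
  assumes c: "c \<in> lcs 2" and y: "y \<in> \<Gamma>"
  shows "\<psi> (gcomm c y) = scale3 (pr3 (\<psi> c)) (abel y)"
proof -
  have "additive_map Gbar (lcs 2) (\<lambda>c. \<psi> (gcomm c y))"
  proof (intro Gbar.additive_mapI lcs_subgroup)
    fix c1 c2 assume c12: "c1 \<in> lcs 2" "c2 \<in> lcs 2"
    then have "gcomm c2 y \<in> lcs 3" "gcomm c1 y \<in> lcs 3"
      using gcomm_lcs2_mem_lcs3 y by auto
    then show "\<psi> (gcomm (c1 \<star> c2) y) = \<psi> (gcomm c1 y) + \<psi> (gcomm c2 y)"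
      using c12 y lcs2_subset_carrier psi_conj_lcs3 lcs3_subset_lcs2
      by (simp add: gcomm_mult_left psi.additive normal.inv_op_closed2[OF lcs_normal] add.commute)
  qed
  moreover have "\<psi> (gcomm x y) = 0" if "x \<in> lcs 4" for x
    using psi_lcs4 gcomm_lcs4_mem_lcs4 that y by simp
  moreover have "\<psi> (gcomm (gcomm gC gA) y) = 0" "\<psi> (gcomm (gcomm gC gB) y) = 0"
    using psi_lcs4 gcomm_lcs3_mem_lcs4 gcomm_lcs2_mem_lcs3 y by auto
  ultimately show ?thesis
    using factor_through_psi[of "\<lambda>c. \<psi> (gcomm c y)" c] c by (simp add: abel_def)
qed

lemma psi_conj:
  assumes g: "g \<in> \<Gamma>" and c: "c \<in> lcs 2"
  shows "\<psi> (g \<star> c \<star> Gbar_inv g) = \<psi> c - scale3 (pr3 (\<psi> c)) (abel g)"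
proof -
  have cG: "c \<in> \<Gamma>"
    using c by (rule lcs2_subset_carrier)
  have "g \<star> c \<star> Gbar_inv g = Gbar_inv (gcomm c g) \<star> c"
    using conj_eq_gcomm_mult[OF g cG] gcomm_swap[OF cG g] by simp
  moreover have "gcomm c g \<in> lcs 2"
    using cG g by simp
  ultimately show ?thesis
    using c psi_gcomm_lcs2[OF c g] psi.additive psi.map_inv subgroup.m_inv_closed[OF lcs_subgroup]
    by simp
qed


lemma abel_pr3 [simp]: "g \<in> \<Gamma> \<Longrightarrow> pr3 (abel g) = 0"
  by (rule Gbar_additive_eq_zero) (simp_all add: abel.additive)

lemma abel_lcs2:
  assumes c: "c \<in> lcs 2"
  shows "abel c = 0"
proof -
  have "abel gC = 0"
    using lcs2_subset_carrier[OF gC_mem_lcs2] by (simp add: abel_def)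
  then show ?thesis
    using c gcomm_swap[of c gC] psi_gcomm_lcs2[OF c] psi.map_inv lcs2_subset_carrier
    by (simp add: abel_def)
qed

lemma abel_decomposition:
  assumes k: "k \<in> lcs 2"
  shows "abel (gA \<up> i \<star> gB \<up> j \<star> k) = (i, j, 0)"
  using k lcs2_subset_carrier
  by (simp add: abel.additive abel_lcs2 Gbar.additive_map_int_pow[OF abel.additive_map_axioms]
      scale3_def)

lemma psi_gcomm_mult_right:
  assumes x: "x \<in> \<Gamma>" and y: "y \<in> \<Gamma>" and z: "z \<in> \<Gamma>"
  shows "\<psi> (gcomm x (y \<star> z)) =
    \<psi> (gcomm x y) + \<psi> (gcomm x z) - scale3 (pr3 (\<psi> (gcomm x z))) (abel y)"
  using x y z psi_conj[of y "gcomm x z"]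
  by (simp add: gcomm_mult_right psi.additive normal.inv_op_closed2[OF lcs_normal])

lemma psi_gcomm_mult_left:
  assumes x: "x \<in> \<Gamma>" and y: "y \<in> \<Gamma>" and z: "z \<in> \<Gamma>"
  shows "\<psi> (gcomm (x \<star> y) z) =
    \<psi> (gcomm x z) + \<psi> (gcomm y z) - scale3 (pr3 (\<psi> (gcomm y z))) (abel x)"
  using x y z psi_conj[of x "gcomm y z"]
  by (simp add: gcomm_mult_left psi.additive normal.inv_op_closed2[OF lcs_normal])

lemma psi3_gcomm:
  assumes x: "x \<in> \<Gamma>" and y: "y \<in> \<Gamma>"
  shows "pr3 (\<psi> (gcomm x y)) = pr1 (abel x) * pr2 (abel y) - pr2 (abel x) * pr1 (abel y)"
proof -
  have A: "pr3 (\<psi> (gcomm gA y)) - pr2 (abel y) = 0"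
    by (rule Gbar_additive_eq_zero[OF _ _ _ y])
      (simp_all add: psi_gcomm_mult_right abel.additive psi_C flip: gC_def)
  have B: "pr3 (\<psi> (gcomm gB y)) + pr1 (abel y) = 0"
  proof (rule Gbar_additive_eq_zero[OF _ _ _ y])
    have "\<psi> (gcomm gB gA) = - \<psi> gC"
      using gcomm_swap[of gA gB] psi.map_inv by (simp add: gC_def)
    then show "pr3 (\<psi> (gcomm gB gA)) + pr1 (abel gA) = 0"
      by (simp add: psi_C)
  qed (simp_all add: psi_gcomm_mult_right abel.additive)
  have "pr3 (\<psi> (gcomm x y)) - (pr1 (abel x) * pr2 (abel y) - pr2 (abel x) * pr1 (abel y)) = 0"
    by (rule Gbar_additive_eq_zero[OF _ _ _ x])
      (use A B y in \<open>simp_all add: psi_gcomm_mult_left abel.additive algebra_simps\<close>)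
  then show ?thesis
    by simp
qed


lemma psi_gcomm_gB_gA_pow: "scale3 2 (\<psi> (gcomm gB (gA \<up> n))) = (n * (n - 1), 0, - 2 * n)"
proof -
  have BA: "\<psi> (gcomm gB gA) = (0, 0, -1)"
    using gcomm_swap[of gA gB] psi.map_inv by (simp add: psi_C flip: gC_def)
  have step: "\<psi> (gcomm gB (gA \<up> (m + 1))) = \<psi> (gcomm gB (gA \<up> m)) + (m, 0, -1)" for m
    using Gbar.int_pow_mult[of gA m 1] psi_gcomm_mult_right[of gB "gA \<up> m" gA] BA
      Gbar.additive_map_int_pow[OF abel.additive_map_axioms, of gA m]
    by (simp add: scale3_def)
  show ?thesis
  proof (induction n rule: int_induct[where k = 0])
    case (step2 i)
    then show ?case
      using step[of "i - 1"] by (simp add: scale3_def algebra_simps)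
  qed (simp_all add: step scale3_def algebra_simps)
qed

lemma psi_gcomm_gA_gB_pow: "scale3 2 (\<psi> (gcomm gA (gB \<up> n))) = (0, - n * (n - 1), 2 * n)"
proof -
  have step: "\<psi> (gcomm gA (gB \<up> (m + 1))) = \<psi> (gcomm gA (gB \<up> m)) + (0, - m, 1)" for m
    using Gbar.int_pow_mult[of gB m 1] psi_gcomm_mult_right[of gA "gB \<up> m" gB]
      Gbar.additive_map_int_pow[OF abel.additive_map_axioms, of gB m]
    by (simp add: scale3_def psi_C flip: gC_def)
  show ?thesis
  proof (induction n rule: int_induct[where k = 0])
    case (step2 i)
    then show ?case
      using step[of "i - 1"] by (simp add: scale3_def algebra_simps)
  qed (simp_all add: step scale3_def algebra_simps)
qed


definition psi_bar :: "mat2 set \<Rightarrow> int \<times> int \<times> int" where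
  "psi_bar d = \<psi> (Gbar_inv (gA \<up> pr1 (abel d) \<star> gB \<up> pr2 (abel d)) \<star> d)"

lemma psi_bar_decomposition:
  assumes k: "k \<in> lcs 2"
  shows "psi_bar (gA \<up> i \<star> gB \<up> j \<star> k) = \<psi> k"
  using k lcs2_subset_carrier unfolding psi_bar_def abel_decomposition[OF k]
  by (simp add: Gbar.word_simps)

lemma psi_bar_lcs2: "k \<in> lcs 2 \<Longrightarrow> psi_bar k = \<psi> k"
  using psi_bar_decomposition[of k 0 0] lcs2_subset_carrier by simp

lemma psi_bar_gA_pow: "psi_bar (gA \<up> k) = 0"
  using psi_bar_decomposition[of "\<one>\<^bsub>Gbar\<^esub>" k 0] by simp

lemma psi_bar_gB_pow: "psi_bar (gB \<up> k) = 0"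
  using psi_bar_decomposition[of "\<one>\<^bsub>Gbar\<^esub>" 0 k] by simp

lemma psi_bar_mult_lcs2:
  assumes d: "d \<in> \<Gamma>" and k: "k \<in> lcs 2"
  shows "psi_bar (d \<star> k) = psi_bar d + \<psi> k"
proof -
  obtain i j k' where k': "k' \<in> lcs 2" and d_eq: "d = gA \<up> i \<star> gB \<up> j \<star> k'"
    using decomposition_AB[OF d] by blast
  then have "d \<star> k = gA \<up> i \<star> gB \<up> j \<star> (k' \<star> k)"
    using k lcs2_subset_carrier by (simp add: Gbar.m_assoc)
  moreover have "psi_bar d = \<psi> k'"
    unfolding d_eq using k' by (rule psi_bar_decomposition)
  ultimately show ?thesis
    using k k' by (simp add: psi_bar_decomposition psi.additive subgroup.m_closed[OF lcs_subgroup])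
qed

lemma psi_bar_lcs2_mult:
  assumes k: "k \<in> lcs 2" and d: "d \<in> \<Gamma>"
  shows "psi_bar (k \<star> d) = psi_bar d + \<psi> k + scale3 (pr3 (\<psi> k)) (abel d)"
proof -
  have "k \<star> d = d \<star> (Gbar_inv d \<star> k \<star> Gbar_inv (Gbar_inv d))"
    using k d lcs2_subset_carrier by (simp add: Gbar.word_simps)
  moreover have "Gbar_inv d \<star> k \<star> Gbar_inv (Gbar_inv d) \<in> lcs 2"
    using k d by (simp add: normal.inv_op_closed1[OF lcs_normal])
  ultimately show ?thesis
    using k d psi_conj[of "Gbar_inv d" k] abel.map_inv
    by (simp add: psi_bar_mult_lcs2 scale3_def)
qed

lemma psi_bar_conj_C_pow:
  "psi_bar (gA \<up> i \<star> gB \<up> j \<star> gC \<up> k \<star> gB \<up> (-j) \<star> gA \<up> (-i)) = (- i * k, - j * k, k)"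
proof -
  define g where "g = gA \<up> i \<star> gB \<up> j"
  have g: "g \<in> \<Gamma>"
    by (simp add: g_def)
  have Ck: "gC \<up> k \<in> lcs 2"
    by (simp add: Gbar.subgroup_int_pow_closed[OF lcs_subgroup])
  have "gA \<up> i \<star> gB \<up> j \<star> gC \<up> k \<star> gB \<up> (-j) \<star> gA \<up> (-i) = g \<star> gC \<up> k \<star> Gbar_inv g"
    using lcs2_subset_carrier[OF Ck] by (simp add: g_def Gbar.int_pow_neg Gbar.word_simps)
  moreover have "abel g = (i, j, 0)"
    using abel_decomposition[of "\<one>\<^bsub>Gbar\<^esub>" i j] by (simp add: g_def subgroup.one_closed[OF lcs_subgroup])
  ultimately show ?thesis
    using g Ck psi_conj[OF g Ck]
    by (simp add: psi_bar_lcs2 normal.inv_op_closed2[OF lcs_normal]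
        Gbar.additive_map_int_pow[OF psi.additive_map_axioms] psi_C scale3_def)
qed

end

section \<open>Reduction modulo \<open>N'\<close>\<close>

locale level_N = psi_coordinates +
  fixes N :: nat
begin

abbreviation Np :: int where "Np \<equiv> Nprime N"

definition Phi :: "mat2 set set" where
  "Phi = {g \<in> \<Gamma>. int N dvd pr1 (abel g) \<and> int N dvd pr2 (abel g)}"

lemma Phi_subgroup: "subgroup Phi Gbar"
proof (rule Gbar.subgroupI)
  have "\<one>\<^bsub>Gbar\<^esub> \<in> Phi"
    by (simp add: Phi_def)
  then show "Phi \<noteq> {}"
    by blast
qed (auto simp: Phi_def abel.additive abel.map_inv)

lemma lcs2_subset_Phi: "k \<in> lcs 2 \<Longrightarrow> k \<in> Phi"
  by (simp add: Phi_def abel_lcs2 lcs2_subset_carrier)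

lemma dvd3_scale3_abel_Phi: "g \<in> Phi \<Longrightarrow> dvd3 Np (scale3 k (abel g))"
  using Nprime_dvd dvd_trans by (fastforce simp: Phi_def dvd3_def)

abbreviation Pow_N :: "mat2 set set" where
  "Pow_N \<equiv> generate Gbar {gA \<up> int N, gB \<up> int N}"

lemma Pow_N_subset_Phi: "Pow_N \<subseteq> Phi"
proof (rule Gbar.generate_subgroup_incl[OF _ Phi_subgroup])
  show "{gA \<up> int N, gB \<up> int N} \<subseteq> Phi"
    by (simp add: Phi_def Gbar.additive_map_int_pow[OF abel.additive_map_axioms] scale3_def)
qed

lemma pow_mem_Pow_N:
  assumes "int N dvd a" "int N dvd b"
  shows "gA \<up> a \<star> gB \<up> b \<in> Pow_N"
proof -
  interpret P: subgroup Pow_N Gbar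
    by (simp add: Gbar.generate_is_subgroup)
  obtain u v where "a = int N * u" "b = int N * v"
    using assms by blast
  moreover have "(gA \<up> int N) \<up> u \<in> Pow_N" "(gB \<up> int N) \<up> v \<in> Pow_N"
    by (auto intro: Gbar.subgroup_int_pow_closed[OF P.subgroup_axioms] generate.incl)
  ultimately show ?thesis
    by (simp add: Gbar.int_pow_pow)
qed

lemma psi_gcomm_pow_N_dvd:
  assumes x: "x \<in> \<Gamma>"
  shows "dvd3 Np (\<psi> (gcomm x (gA \<up> int N)))" "dvd3 Np (\<psi> (gcomm x (gB \<up> int N)))"
proof -
  have hom: "hom_modulo Gbar \<Gamma> (\<lambda>x. \<psi> (gcomm x h)) {v. dvd3 Np v}" if h: "h \<in> Phi" for h
  proof (rule Gbar.hom_moduloI[OF Gbar.subgroup_self], simp_all add: dvd3_diff)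
    fix y z assume "y \<in> \<Gamma>" "z \<in> \<Gamma>"
    moreover have "h \<in> \<Gamma>"
      using h by (simp add: Phi_def)
    moreover have "Np dvd pr3 (\<psi> (gcomm z h))" if "z \<in> \<Gamma>"
    proof -
      have "int N dvd pr3 (\<psi> (gcomm z h))"
        using psi3_gcomm[OF that \<open>h \<in> \<Gamma>\<close>] h by (simp add: Phi_def)
      then show ?thesis
        using Nprime_dvd dvd_trans by blast
    qed
    ultimately show "dvd3 Np (\<psi> (gcomm (y \<star> z) h) - \<psi> (gcomm y h) - \<psi> (gcomm z h))"
      by (simp add: psi_gcomm_mult_left dvd3_def)
  qed
  have AN: "gA \<up> int N \<in> Phi" and BN: "gB \<up> int N \<in> Phi"
    using Pow_N_subset_Phi by (auto intro: generate.incl)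
  \<comment> \<open>\<open>\<psi> [B, A^N] = (N(N - 1)/2, 0, -N)\<close>: here \<open>N'\<close> rather than \<open>N\<close> is needed.\<close>
  have "dvd3 Np (\<psi> (gcomm gB (gA \<up> int N)))"
    using psi_gcomm_gB_gA_pow[of "int N"] Nprime_dvd_half[of "pr1 (\<psi> (gcomm gB (gA \<up> int N)))" N]
      Nprime_dvd by (simp add: scale3_def dvd3_def)
  then show "dvd3 Np (\<psi> (gcomm x (gA \<up> int N)))"
    using Gbar_hom_modulo_mem[OF hom[OF AN] _ _ x] by simp
  have "dvd3 Np (\<psi> (gcomm gA (gB \<up> int N)))"
    using psi_gcomm_gA_gB_pow[of "int N"] Nprime_dvd_half[of "- pr2 (\<psi> (gcomm gA (gB \<up> int N)))" N]
      Nprime_dvd by (simp add: scale3_def dvd3_def)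
  then show "dvd3 Np (\<psi> (gcomm x (gB \<up> int N)))"
    using Gbar_hom_modulo_mem[OF hom[OF BN] _ _ x] by simp
qed

lemma psi_gcomm_Pow_N_dvd:
  assumes x: "x \<in> \<Gamma>" and h: "h \<in> Pow_N"
  shows "dvd3 Np (\<psi> (gcomm x h))"
proof -
  interpret hom_modulo Gbar Phi "\<lambda>y. \<psi> (gcomm x y)" "{v. dvd3 Np v}"
  proof (rule Gbar.hom_moduloI[OF Phi_subgroup], simp_all add: dvd3_diff)
    fix y z assume "y \<in> Phi" "z \<in> Phi"
    then show "dvd3 Np (\<psi> (gcomm x (y \<star> z)) - \<psi> (gcomm x y) - \<psi> (gcomm x z))"
      using x dvd3_uminus[OF dvd3_scale3_abel_Phi[of y]]
      by (simp add: psi_gcomm_mult_right Phi_def)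
  qed
  show ?thesis
    by (rule generate_mem[OF _ _ h, simplified])
      (use Pow_N_subset_Phi psi_gcomm_pow_N_dvd[OF x] in \<open>auto intro: generate.incl\<close>)
qed

lemma psi_bar_powers_mult:
  assumes N_dvd: "int N dvd i" "int N dvd j" "int N dvd i'" "int N dvd j'"
  shows "dvd3 Np (psi_bar (gA \<up> i \<star> gB \<up> j \<star> (gA \<up> i' \<star> gB \<up> j')))"
proof -
  define c where "c = gcomm (gB \<up> j) (gA \<up> i')"
  define l where "l = gA \<up> i \<star> c \<star> Gbar_inv (gA \<up> i)"
  define h where "h = gA \<up> (i + i') \<star> gB \<up> (j + j')"
  have c: "c \<in> lcs 2"
    by (simp add: c_def)
  have l: "l \<in> lcs 2"
    using c by (simp add: l_def normal.inv_op_closed2[OF lcs_normal])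
  have "gA \<up> i' \<star> gB \<up> 0 \<in> Pow_N"
    using N_dvd by (intro pow_mem_Pow_N) simp_all
  then have "dvd3 Np (\<psi> c)"
    unfolding c_def by (intro psi_gcomm_Pow_N_dvd) simp_all
  then have "dvd3 Np (\<psi> l)"
    using psi_conj[of "gA \<up> i" c] c
    by (simp add: l_def dvd3_diff dvd3_scale3_left dvd3_def)
  moreover have "h \<in> Phi"
    using N_dvd abel_decomposition[of "\<one>\<^bsub>Gbar\<^esub>" "i + i'" "j + j'"]
    by (simp add: h_def Phi_def subgroup.one_closed[OF lcs_subgroup])
  moreover have "psi_bar h = 0"
    using psi_bar_decomposition[of "\<one>\<^bsub>Gbar\<^esub>" "i + i'" "j + j'"]
    by (simp add: h_def subgroup.one_closed[OF lcs_subgroup])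
  moreover have "gA \<up> i \<star> gB \<up> j \<star> (gA \<up> i' \<star> gB \<up> j') = l \<star> h"
    by (simp add: l_def c_def h_def gcomm_def Gbar.int_pow_mult Gbar.word_simps)
  ultimately show ?thesis
    using l psi_bar_lcs2_mult[OF l, of h]
    by (simp add: dvd3_add dvd3_scale3_abel_Phi Phi_def)
qed

lemma Phi_decomposition:
  assumes d: "d \<in> Phi"
  obtains i j k where "int N dvd i" "int N dvd j" "k \<in> lcs 2" "d = gA \<up> i \<star> gB \<up> j \<star> k"
proof -
  have "d \<in> \<Gamma>"
    using d by (simp add: Phi_def)
  then obtain i j k where k: "k \<in> lcs 2" and d_eq: "d = gA \<up> i \<star> gB \<up> j \<star> k"
    using decomposition_AB by blast
  moreover have "int N dvd i" "int N dvd j"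
    using d k by (simp_all add: d_eq Phi_def abel_decomposition)
  ultimately show ?thesis
    using that by blast
qed

lemma psi_bar_mult:
  assumes x: "x \<in> Phi" and y: "y \<in> Phi"
  shows "modeq3 Np (psi_bar (x \<star> y)) (psi_bar x + psi_bar y)"
proof -
  obtain i j k where ij: "int N dvd i" "int N dvd j" and k: "k \<in> lcs 2"
    and x_eq: "x = gA \<up> i \<star> gB \<up> j \<star> k"
    using Phi_decomposition[OF x] by blast
  obtain i' j' k' where ij': "int N dvd i'" "int N dvd j'" and k': "k' \<in> lcs 2"
    and y_eq: "y = gA \<up> i' \<star> gB \<up> j' \<star> k'"
    using Phi_decomposition[OF y] by blast
  define h' where "h' = gA \<up> i' \<star> gB \<up> j'"
  have h': "h' \<in> Phi"
    using ij' pow_mem_Pow_N Pow_N_subset_Phi by (auto simp: h'_def)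
  then have h'G: "h' \<in> \<Gamma>"
    by (simp add: Phi_def)
  have k_conj: "Gbar_inv h' \<star> k \<star> h' \<in> lcs 2"
    using h'G k by (simp add: normal.inv_op_closed1[OF lcs_normal])
  have "x \<star> y = gA \<up> i \<star> gB \<up> j \<star> h' \<star> ((Gbar_inv h' \<star> k \<star> h') \<star> k')"
    using h'G k k' lcs2_subset_carrier by (simp add: x_eq y_eq h'_def Gbar.word_simps)
  then have "psi_bar (x \<star> y) =
      psi_bar (gA \<up> i \<star> gB \<up> j \<star> h') + \<psi> (Gbar_inv h' \<star> k \<star> h') + \<psi> k'"
    using h'G k_conj k' by (simp add: psi_bar_mult_lcs2 psi.additive subgroup.m_closed[OF lcs_subgroup])
  moreover have "\<psi> (Gbar_inv h' \<star> k \<star> h') = \<psi> k - scale3 (pr3 (\<psi> k)) (abel (Gbar_inv h'))"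
    using psi_conj[of "Gbar_inv h'" k] h'G k by simp
  moreover have "psi_bar x = \<psi> k" "psi_bar y = \<psi> k'"
    using k k' by (simp_all add: x_eq y_eq psi_bar_decomposition)
  moreover have "dvd3 Np (psi_bar (gA \<up> i \<star> gB \<up> j \<star> h'))"
    unfolding h'_def using ij ij' by (rule psi_bar_powers_mult)
  moreover have "dvd3 Np (scale3 (pr3 (\<psi> k)) (abel (Gbar_inv h')))"
    using h' by (simp add: dvd3_scale3_abel_Phi subgroup.m_inv_closed[OF Phi_subgroup])
  ultimately show ?thesis
    unfolding modeq3_iff_dvd3 by (simp add: dvd3_diff diff_diff_eq[symmetric])
qed

lemma psi_bar_conj:
  assumes g: "g \<in> \<Gamma>" and d: "d \<in> Phi"
  shows "dvd3 Np (psi_bar (g \<star> d \<star> Gbar_inv g) - (psi_bar d - scale3 (pr3 (psi_bar d)) (abel g)))"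
proof -
  obtain i j k where ij: "int N dvd i" "int N dvd j" and k: "k \<in> lcs 2"
    and d_eq: "d = gA \<up> i \<star> gB \<up> j \<star> k"
    using Phi_decomposition[OF d] by blast
  define h where "h = gA \<up> i \<star> gB \<up> j"
  have h: "h \<in> Pow_N" "h \<in> Phi"
    using ij pow_mem_Pow_N Pow_N_subset_Phi by (auto simp: h_def)
  have G: "d \<in> \<Gamma>" "h \<in> \<Gamma>" "k \<in> \<Gamma>"
    using d k lcs2_subset_carrier by (simp_all add: Phi_def h_def)
  have psi_bar_d: "psi_bar d = \<psi> k"
    using k by (simp add: d_eq psi_bar_decomposition)
  have gd: "gcomm g d \<in> lcs 2"
    using g G by simp
  have "psi_bar (g \<star> d \<star> Gbar_inv g) =
      psi_bar d + \<psi> (gcomm g d) + scale3 (pr3 (\<psi> (gcomm g d))) (abel d)"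
    using conj_eq_gcomm_mult[OF g G(1)] psi_bar_lcs2_mult[OF gd G(1)] by simp
  moreover have "\<psi> (gcomm g d) =
      \<psi> (gcomm g h) - scale3 (pr3 (\<psi> k)) (abel g) - scale3 (pr3 (\<psi> (gcomm g k))) (abel h)"
    using g G k psi_gcomm_lcs2[OF k g] gcomm_swap[OF G(3) g] psi.map_inv
    by (simp add: d_eq h_def[symmetric] psi_gcomm_mult_right)
  moreover have "dvd3 Np (\<psi> (gcomm g h))"
    using g h by (simp add: psi_gcomm_Pow_N_dvd)
  ultimately show ?thesis
    using d h by (simp add: psi_bar_d dvd3_scale3_abel_Phi dvd3_diff dvd3_add)
qed

end

locale proposition7_setting = level_N +
  fixes \<phi>1 :: "mat2 set \<Rightarrow> int \<times> int" and \<phi>2 :: "mat2 set \<Rightarrow> int"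
  assumes phi1_hom: "\<forall>x\<in>carrier Gbar. \<forall>y\<in>carrier Gbar.
                     modeq2 (int N) (\<phi>1 (x \<otimes>\<^bsub>Gbar\<^esub> y)) (\<phi>1 x + \<phi>1 y)"
    and phi1_A: "modeq2 (int N) (\<phi>1 gA) (1,0)"
    and phi1_B: "modeq2 (int N) (\<phi>1 gB) (0,1)"
    and phi2_hom: "\<forall>x\<in>{x \<in> carrier Gbar. modeq2 (int N) (\<phi>1 x) (0,0)}.
                   \<forall>y\<in>{x \<in> carrier Gbar. modeq2 (int N) (\<phi>1 x) (0,0)}.
                     (\<phi>2 (x \<otimes>\<^bsub>Gbar\<^esub> y)) mod Nprime N = (\<phi>2 x + \<phi>2 y) mod Nprime N"
    and phi2_AN: "\<phi>2 (gA [^]\<^bsub>Gbar\<^esub> N) mod Nprime N = 0"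
    and phi2_BN: "\<phi>2 (gB [^]\<^bsub>Gbar\<^esub> N) mod Nprime N = 0"
    and phi2_C: "\<forall>(i::int) (j::int). \<phi>2 (gA [^]\<^bsub>Gbar\<^esub> i \<otimes>\<^bsub>Gbar\<^esub> gB [^]\<^bsub>Gbar\<^esub> j \<otimes>\<^bsub>Gbar\<^esub> gC
                    \<otimes>\<^bsub>Gbar\<^esub> gB [^]\<^bsub>Gbar\<^esub> (-j) \<otimes>\<^bsub>Gbar\<^esub> gA [^]\<^bsub>Gbar\<^esub> (-i)) mod Nprime N = 1 mod Nprime N"
begin

lemma phi1_abel:
  assumes g: "g \<in> \<Gamma>"
  shows "int N dvd fst (\<phi>1 g) - pr1 (abel g) \<and> int N dvd snd (\<phi>1 g) - pr2 (abel g)"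
proof -
  let ?\<kappa> = "\<lambda>g. (fst (\<phi>1 g) - pr1 (abel g), snd (\<phi>1 g) - pr2 (abel g))"
  have "hom_modulo Gbar \<Gamma> ?\<kappa> {v. int N dvd fst v \<and> int N dvd snd v}"
  proof (rule Gbar.hom_moduloI[OF Gbar.subgroup_self], simp_all)
    fix x y assume "x \<in> \<Gamma>" "y \<in> \<Gamma>"
    then show "int N dvd fst (\<phi>1 (x \<star> y)) - pr1 (abel (x \<star> y)) - (fst (\<phi>1 x) - pr1 (abel x))
          - (fst (\<phi>1 y) - pr1 (abel y)) \<and>
        int N dvd snd (\<phi>1 (x \<star> y)) - pr2 (abel (x \<star> y)) - (snd (\<phi>1 x) - pr2 (abel x))
          - (snd (\<phi>1 y) - pr2 (abel y))"
      using phi1_hom by (simp add: modeq2_iff_dvd abel.additive algebra_simps)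
  qed
  from Gbar_hom_modulo_mem[OF this _ _ g] show ?thesis
    using phi1_A phi1_B by (simp add: modeq2_iff_dvd)
qed

lemma Phi_eq: "{x \<in> \<Gamma>. modeq2 (int N) (\<phi>1 x) (0,0)} = Phi"
proof -
  have iff: "n dvd a - b \<Longrightarrow> n dvd a \<longleftrightarrow> n dvd b" for n a b :: int
    using dvd_add[of n "a - b" b] dvd_diff[of n a "a - b"] by auto
  have "modeq2 (int N) (\<phi>1 x) (0,0) \<longleftrightarrow> int N dvd pr1 (abel x) \<and> int N dvd pr2 (abel x)"
    if "x \<in> \<Gamma>" for x
    using phi1_abel[OF that] iff[of "int N" "fst (\<phi>1 x)" "pr1 (abel x)"]
      iff[of "int N" "snd (\<phi>1 x)" "pr2 (abel x)"]
    by (simp add: modeq2_iff_dvd)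
  then show ?thesis
    unfolding Phi_def by blast
qed


sublocale phi2: hom_modulo Gbar Phi \<phi>2 "{v. Nprime N dvd v}"
  using phi2_hom unfolding Phi_eq
  by (intro Gbar.hom_moduloI Phi_subgroup) (simp_all add: mod_eq_dvd_iff diff_diff_add)


lemma phi2_Pow_N:
  assumes h: "h \<in> Pow_N"
  shows "Np dvd \<phi>2 h"
proof -
  have "\<phi>2 h \<in> {v. Np dvd v}"
  proof (rule phi2.generate_mem[OF _ _ h])
    show "{gA \<up> int N, gB \<up> int N} \<subseteq> Phi"
      using Pow_N_subset_Phi by (blast intro: generate.incl)
  next
    fix s assume "s \<in> {gA \<up> int N, gB \<up> int N}"
    then show "\<phi>2 s \<in> {v. Np dvd v}"
      using phi2_AN phi2_BN by (auto simp: int_pow_int dvd_eq_mod_eq_0)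
  qed
  then show ?thesis
    by simp
qed

lemma phi2_conj_gC:
  assumes g: "g \<in> \<Gamma>"
  shows "Np dvd \<phi>2 (g \<star> gC \<star> Gbar_inv g) - 1"
proof -
  obtain i j k where k: "k \<in> lcs 2" and g_eq: "g = gA \<up> i \<star> gB \<up> j \<star> k"
    using decomposition_AB[OF g] by blast
  define h where "h = gA \<up> i \<star> gB \<up> j"
  have G: "h \<in> \<Gamma>" "k \<in> \<Gamma>" "gC \<in> \<Gamma>"
    using k lcs2_subset_carrier by (simp_all add: h_def)
  define k' where "k' = h \<star> k \<star> Gbar_inv h"
  define c' where "c' = h \<star> gC \<star> Gbar_inv h"
  have "k' \<in> Phi" "c' \<in> Phi"
    using G k by (simp_all add: k'_def c'_def lcs2_subset_Phi normal.inv_op_closed2[OF lcs_normal])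
  then have conj: "Np dvd \<phi>2 (k' \<star> c' \<star> Gbar_inv k') - \<phi>2 c'"
    using phi2.conj_mem by simp
  have "c' = gA \<up> i \<star> gB \<up> j \<star> gC \<star> gB \<up> (-j) \<star> gA \<up> (-i)"
    using G by (simp add: c'_def h_def Gbar.int_pow_neg Gbar.word_simps)
  then have "Np dvd \<phi>2 c' - 1"
    using phi2_C by (simp add: mod_eq_dvd_iff)
  with conj have "Np dvd (\<phi>2 (k' \<star> c' \<star> Gbar_inv k') - \<phi>2 c') + (\<phi>2 c' - 1)"
    by (rule dvd_add)
  moreover have "g \<star> gC \<star> Gbar_inv g = k' \<star> c' \<star> Gbar_inv k'"
    using G by (simp add: g_eq k'_def c'_def h_def[symmetric] Gbar.word_simps)
  ultimately show ?thesis
    by simp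
qed

lemma phi2_lcs2:
  assumes k: "k \<in> lcs 2"
  shows "Np dvd \<phi>2 k - pr3 (\<psi> k)"
proof -
  interpret hom_modulo Gbar "lcs 2" "\<lambda>k. \<phi>2 k - pr3 (\<psi> k)" "{v. Np dvd v}"
  proof (rule Gbar.hom_moduloI[OF lcs_subgroup], simp_all)
    fix x y assume "x \<in> lcs 2" "y \<in> lcs 2"
    then show "Np dvd \<phi>2 (x \<star> y) - pr3 (\<psi> (x \<star> y)) - (\<phi>2 x - pr3 (\<psi> x)) - (\<phi>2 y - pr3 (\<psi> y))"
      using phi2.mult_mem[of x y] lcs2_subset_Phi by (simp add: psi.additive algebra_simps)
  qed
  have "\<phi>2 k - pr3 (\<psi> k) \<in> {v. Np dvd v}"
  proof (rule generate_mem)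
    show "{g \<star> gC \<star> Gbar_inv g | g. g \<in> \<Gamma>} \<subseteq> lcs 2"
      by (auto simp: normal.inv_op_closed2[OF lcs_normal])
    show "k \<in> generate Gbar {g \<star> gC \<star> Gbar_inv g | g. g \<in> \<Gamma>}"
      using k lcs2_subset_normal_closure_gC by blast
  next
    fix s assume "s \<in> {g \<star> gC \<star> Gbar_inv g | g. g \<in> \<Gamma>}"
    then obtain g where g: "g \<in> \<Gamma>" and s: "s = g \<star> gC \<star> Gbar_inv g"
      by blast
    have "pr3 (\<psi> s) = 1"
      using psi_conj[OF g gC_mem_lcs2] g by (simp add: s psi_C)
    then show "\<phi>2 s - pr3 (\<psi> s) \<in> {v. Np dvd v}"
      using phi2_conj_gC[OF g] by (simp add: s)
  qed
  then show ?thesis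
    by simp
qed

lemma phi2_eq_psi_bar3:
  assumes d: "d \<in> Phi"
  shows "Np dvd \<phi>2 d - pr3 (psi_bar d)"
proof -
  obtain i j k where ij: "int N dvd i" "int N dvd j" and k: "k \<in> lcs 2"
    and d_eq: "d = gA \<up> i \<star> gB \<up> j \<star> k"
    using Phi_decomposition[OF d] by blast
  define h where "h = gA \<up> i \<star> gB \<up> j"
  have h: "h \<in> Pow_N" "h \<in> Phi"
    using ij pow_mem_Pow_N Pow_N_subset_Phi by (auto simp: h_def)
  have "Np dvd \<phi>2 d - \<phi>2 h - \<phi>2 k"
    using phi2.mult_mem[of h k] h k lcs2_subset_Phi by (simp add: d_eq h_def)
  then have "Np dvd (\<phi>2 d - \<phi>2 h - \<phi>2 k) + \<phi>2 h + (\<phi>2 k - pr3 (\<psi> k))"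
    using phi2_Pow_N[OF h(1)] phi2_lcs2[OF k] by (intro dvd_add)
  moreover have "psi_bar d = \<psi> k"
    using k by (simp add: d_eq psi_bar_decomposition)
  ultimately show ?thesis
    by simp
qed


lemma psi_bar_conj_phi:
  assumes g: "g \<in> \<Gamma>" and d: "d \<in> Phi"
  shows "modeq3 Np (psi_bar (g \<star> d \<star> Gbar_inv g))
    ((- (fst (\<phi>1 g) * \<phi>2 d), - (snd (\<phi>1 g) * \<phi>2 d), 0) + psi_bar d)"
proof -
  have mult_cong: "Np dvd a * b - a' * b'" if "Np dvd a - a'" "Np dvd b - b'" for a a' b b' :: int
    using that mod_mult_cong[of a Np a' b b'] by (simp add: mod_eq_dvd_iff)
  have "Np dvd fst (\<phi>1 g) - pr1 (abel g)" "Np dvd snd (\<phi>1 g) - pr2 (abel g)"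
    using phi1_abel[OF g] Nprime_dvd dvd_trans by blast+
  then have approx: "dvd3 Np (scale3 (pr3 (psi_bar d)) (abel g)
      - (fst (\<phi>1 g) * \<phi>2 d, snd (\<phi>1 g) * \<phi>2 d, 0))"
    using mult_cong phi2_eq_psi_bar3[OF d] g
    by (simp add: dvd3_def dvd_diff_commute mult.commute[of "pr3 (psi_bar d)"])
  have "psi_bar (g \<star> d \<star> Gbar_inv g) - ((- (fst (\<phi>1 g) * \<phi>2 d), - (snd (\<phi>1 g) * \<phi>2 d), 0) + psi_bar d)
      = (psi_bar (g \<star> d \<star> Gbar_inv g) - (psi_bar d - scale3 (pr3 (psi_bar d)) (abel g)))
        - (scale3 (pr3 (psi_bar d)) (abel g) - (fst (\<phi>1 g) * \<phi>2 d, snd (\<phi>1 g) * \<phi>2 d, 0))"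
    (is "_ = ?rhs") by (simp add: prod_eq_iff)
  moreover have "dvd3 Np ?rhs"
    using psi_bar_conj[OF g d] approx by (rule dvd3_diff)
  ultimately show ?thesis
    unfolding modeq3_iff_dvd3 by (simp only:)
qed

end

theorem proposition7:
  fixes N :: nat
    and \<psi> :: "mat2 set \<Rightarrow> int \<times> int \<times> int"
    and \<phi>1 :: "mat2 set \<Rightarrow> int \<times> int"
    and \<phi>2 :: "mat2 set \<Rightarrow> int"
  defines "Np \<equiv> Nprime N"
  defines "PhiN \<equiv> {x \<in> carrier Gbar. modeq2 (int N) (\<phi>1 x) (0,0)}"
  assumes N: "N \<ge> 1"
    and psi_hom: "\<forall>x\<in>lcs 2. \<forall>y\<in>lcs 2. \<psi> (x \<otimes>\<^bsub>Gbar\<^esub> y) = \<psi> x + \<psi> y"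
    and psi_ker: "{x \<in> lcs 2. \<psi> x = 0} = lcs 4"
    and psi_C: "\<psi> gC = (0,0,1)"
    and psi_CA: "\<psi> (gcomm gC gA) = (1,0,0)"
    and psi_CB: "\<psi> (gcomm gC gB) = (0,1,0)"
    and phi1_hom: "\<forall>x\<in>carrier Gbar. \<forall>y\<in>carrier Gbar.
                     modeq2 (int N) (\<phi>1 (x \<otimes>\<^bsub>Gbar\<^esub> y)) (\<phi>1 x + \<phi>1 y)"
    and phi1_A: "modeq2 (int N) (\<phi>1 gA) (1,0)"
    and phi1_B: "modeq2 (int N) (\<phi>1 gB) (0,1)"
    and phi2_hom: "\<forall>x\<in>PhiN. \<forall>y\<in>PhiN. (\<phi>2 (x \<otimes>\<^bsub>Gbar\<^esub> y)) mod Np = (\<phi>2 x + \<phi>2 y) mod Np"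
    and phi2_AN: "\<phi>2 (gA [^]\<^bsub>Gbar\<^esub> N) mod Np = 0"
    and phi2_BN: "\<phi>2 (gB [^]\<^bsub>Gbar\<^esub> N) mod Np = 0"
    and phi2_C: "\<forall>(i::int) (j::int). \<phi>2 (gA [^]\<^bsub>Gbar\<^esub> i \<otimes>\<^bsub>Gbar\<^esub> gB [^]\<^bsub>Gbar\<^esub> j \<otimes>\<^bsub>Gbar\<^esub> gC
                    \<otimes>\<^bsub>Gbar\<^esub> gB [^]\<^bsub>Gbar\<^esub> (-j) \<otimes>\<^bsub>Gbar\<^esub> gA [^]\<^bsub>Gbar\<^esub> (-i)) mod Np = 1 mod Np"
  shows "\<exists>\<psi>b :: mat2 set \<Rightarrow> int \<times> int \<times> int.
           (\<forall>x\<in>PhiN. \<forall>y\<in>PhiN. modeq3 Np (\<psi>b (x \<otimes>\<^bsub>Gbar\<^esub> y)) (\<psi>b x + \<psi>b y))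
         \<and> (\<forall>x\<in>lcs 2. modeq3 Np (\<psi>b x) (\<psi> x))
         \<and> modeq3 Np (\<psi>b (gA [^]\<^bsub>Gbar\<^esub> N)) 0
         \<and> modeq3 Np (\<psi>b (gB [^]\<^bsub>Gbar\<^esub> N)) 0
         \<and> (\<forall>\<gamma>\<in>carrier Gbar. \<forall>\<delta>\<in>PhiN.
              modeq3 Np (\<psi>b (\<gamma> \<otimes>\<^bsub>Gbar\<^esub> \<delta> \<otimes>\<^bsub>Gbar\<^esub> inv\<^bsub>Gbar\<^esub> \<gamma>))
                ((- (fst (\<phi>1 \<gamma>) * \<phi>2 \<delta>), - (snd (\<phi>1 \<gamma>) * \<phi>2 \<delta>), 0) + \<psi>b \<delta>))
         \<and> (\<forall>(i::int) (j::int) (k::int).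
              modeq3 Np (\<psi>b (gA [^]\<^bsub>Gbar\<^esub> i \<otimes>\<^bsub>Gbar\<^esub> gB [^]\<^bsub>Gbar\<^esub> j \<otimes>\<^bsub>Gbar\<^esub> gC [^]\<^bsub>Gbar\<^esub> k
                    \<otimes>\<^bsub>Gbar\<^esub> gB [^]\<^bsub>Gbar\<^esub> (-j) \<otimes>\<^bsub>Gbar\<^esub> gA [^]\<^bsub>Gbar\<^esub> (-i)))
                (- i * k, - j * k, k))"
proof -
  interpret proposition7_setting \<psi> N \<phi>1 \<phi>2
    using psi_hom psi_ker psi_C psi_CA psi_CB phi1_hom phi1_A phi1_B phi2_hom phi2_AN phi2_BN phi2_C
    unfolding Np_def PhiN_def by unfold_locales
  have "PhiN = Phi"
    unfolding PhiN_def by (rule Phi_eq)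
  moreover have "psi_bar (gA [^]\<^bsub>Gbar\<^esub> N) = 0" "psi_bar (gB [^]\<^bsub>Gbar\<^esub> N) = 0"
    using psi_bar_gA_pow[of "int N"] psi_bar_gB_pow[of "int N"] by (simp_all add: int_pow_int)
  ultimately show ?thesis
    unfolding Np_def
    by (intro exI[of _ psi_bar] conjI ballI allI)
      (simp_all add: psi_bar_mult psi_bar_lcs2 psi_bar_conj_phi psi_bar_conj_C_pow)
qed

end
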